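(* Let $A$ be a nonempty finite set of $n$ alternatives. A choice rule $C$ on $A$ is responsive if and only if it satisfies capacity-filling and the capacity-wise weaker axiom of revealed preference (CWrARP).
   Context: Let $\mathcal{A}$ be the set of nonempty subsets of $A$. A choice rule assigns to each $(S,q)\in\mathcal{A}\times\{1,\dots,n\}$ a nonempty set $C(S,q)\subseteq S$ with $|C(S,q)|\le q$. A priority ordering is a complete, transitive, antisymmetric binary relation on $A$. $C$ is responsive for a priority ordering $\succ$ if for each $(S,q)$, $C(S,q)$ is obtained by choosing the highest $\succ$-priority alternatives in $S$ until $q$ alternatives are chosen or no alternative is left; $C$ is responsive if it is responsive for some priority ordering. Capacity-filling: $|C(S,q)|=\min\{|S|,q\}$ for all $(S,q)$. CWrARP: for each $S,S'\in\mathcal{A}$, $q,q'\in\{1,\dots,n\}$ and each $a,b\in S\cap S'$, if $a\in C(S,q)$ and $b\in C(S',q')\setminus C(S,q)$, then $a\in C(S',q')$. *)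

theory Defs
  imports Main
begin

definition dom_pairs :: "'a set \<Rightarrow> ('a set \<times> nat) set" where
  "dom_pairs A = {(S, q). S \<subseteq> A \<and> S \<noteq> {} \<and> 1 \<le> q \<and> q \<le> card A}"

definition choice_rule :: "'a set \<Rightarrow> ('a set \<Rightarrow> nat \<Rightarrow> 'a set) \<Rightarrow> bool" where
  "choice_rule A C \<longleftrightarrow> (\<forall>(S, q) \<in> dom_pairs A. C S q \<noteq> {} \<and> C S q \<subseteq> S \<and> card (C S q) \<le> q)"

text \<open>A priority ordering on A: complete, transitive, antisymmetric (hence reflexive) relation on A.
  (b, a) \<in> P means b has (weakly) higher priority than a.\<close>
definition priority_ordering :: "'a set \<Rightarrow> ('a \<times> 'a) set \<Rightarrow> bool" where
  "priority_ordering A P \<longleftrightarrow> P \<subseteq> A \<times> A \<and> linear_order_on A P"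

text \<open>Choosing the highest-priority alternatives of S until q are chosen or none is left:
  a is chosen iff fewer than q alternatives of S have strictly higher priority than a.\<close>
definition top_choice :: "('a \<times> 'a) set \<Rightarrow> 'a set \<Rightarrow> nat \<Rightarrow> 'a set" where
  "top_choice P S q = {a \<in> S. card {b \<in> S. (b, a) \<in> P \<and> b \<noteq> a} < q}"

definition responsive_for :: "'a set \<Rightarrow> ('a \<times> 'a) set \<Rightarrow> ('a set \<Rightarrow> nat \<Rightarrow> 'a set) \<Rightarrow> bool" where
  "responsive_for A P C \<longleftrightarrow> (\<forall>(S, q) \<in> dom_pairs A. C S q = top_choice P S q)"

definition responsive :: "'a set \<Rightarrow> ('a set \<Rightarrow> nat \<Rightarrow> 'a set) \<Rightarrow> bool" where
  "responsive A C \<longleftrightarrow> (\<exists>P. priority_ordering A P \<and> responsive_for A P C)"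

definition capacity_filling :: "'a set \<Rightarrow> ('a set \<Rightarrow> nat \<Rightarrow> 'a set) \<Rightarrow> bool" where
  "capacity_filling A C \<longleftrightarrow> (\<forall>(S, q) \<in> dom_pairs A. card (C S q) = min (card S) q)"

definition CWrARP :: "'a set \<Rightarrow> ('a set \<Rightarrow> nat \<Rightarrow> 'a set) \<Rightarrow> bool" where
  "CWrARP A C \<longleftrightarrow> (\<forall>(S, q) \<in> dom_pairs A. \<forall>(S', q') \<in> dom_pairs A. \<forall>a \<in> S \<inter> S'. \<forall>b \<in> S \<inter> S'.
      a \<in> C S q \<and> b \<in> C S' q' - C S q \<longrightarrow> a \<in> C S' q')"

end

theory Submission
  imports Defs
begin

text \<open>A priority ordering ranks every alternative of S by the number of alternatives above it;
  for a linear order these ranks are exactly 0, ..., |S| - 1, so choosing the ranks below q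
  fills the capacity. Conversely, from a capacity-filling choice rule satisfying CWrARP we read
  off a priority by letting b beat a iff b is chosen from {a, b} with capacity 1. CWrARP makes
  every chosen alternative beat every rejected one, which first makes the revealed priority
  transitive (look at the choice from a triple) and then shows that C S q is contained in the
  responsive choice; capacity filling forces equality.\<close>

definition strictly_above :: "('a \<times> 'a) set \<Rightarrow> 'a set \<Rightarrow> 'a \<Rightarrow> 'a set" where
  "strictly_above P S a = {b \<in> S. (b, a) \<in> P \<and> b \<noteq> a}"

lemma top_choice_iff: "a \<in> top_choice P S q \<longleftrightarrow> a \<in> S \<and> card (strictly_above P S a) < q"
  unfolding top_choice_def strictly_above_def by simp

lemma card_strictly_above_less:
  assumes "trans P" "antisym P" "finite S" "a \<in> S" "(a, b) \<in> P" "a \<noteq> b"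
  shows "card (strictly_above P S a) < card (strictly_above P S b)"
proof (rule psubset_card_mono)
  show "finite (strictly_above P S b)"
    using \<open>finite S\<close> unfolding strictly_above_def by simp
  have "strictly_above P S a \<subseteq> strictly_above P S b"
    unfolding strictly_above_def using assms by (auto dest: transD antisymD)
  moreover have "a \<in> strictly_above P S b" "a \<notin> strictly_above P S a"
    unfolding strictly_above_def using assms by auto
  ultimately show "strictly_above P S a \<subset> strictly_above P S b" by blast
qed

lemma top_choice_upward_closed:
  assumes "trans P" "antisym P" "finite S"
    and "a \<in> top_choice P S q" "b \<in> S" "(b, a) \<in> P"
  shows "b \<in> top_choice P S q"
proof (cases "b = a")
  case False
  then have "card (strictly_above P S b) < card (strictly_above P S a)"
    using card_strictly_above_less[OF assms(1-3)] assms(5,6) by blast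
  then show ?thesis using assms(4,5) unfolding top_choice_iff by simp
qed (use assms(4) in simp)

lemma bij_betw_card_strictly_above:
  assumes "trans P" "antisym P" "total_on S P" "finite S"
  shows "bij_betw (\<lambda>a. card (strictly_above P S a)) S {..<card S}"
proof -
  let ?rank = "\<lambda>a. card (strictly_above P S a)"
  have "inj_on ?rank S"
  proof (rule inj_onI, rule ccontr)
    fix a b assume "a \<in> S" "b \<in> S" "?rank a = ?rank b" "a \<noteq> b"
    moreover have "(a, b) \<in> P \<or> (b, a) \<in> P"
      using \<open>total_on S P\<close> \<open>a \<in> S\<close> \<open>b \<in> S\<close> \<open>a \<noteq> b\<close> unfolding total_on_def by blast
    ultimately show False
      using card_strictly_above_less[OF assms(1,2,4)] by (metis less_irrefl)
  qed
  moreover have "?rank ` S \<subseteq> {..<card S}"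
  proof clarify
    fix a assume "a \<in> S"
    then have "strictly_above P S a \<subseteq> S - {a}" unfolding strictly_above_def by auto
    then have "?rank a \<le> card (S - {a})" using \<open>finite S\<close> by (intro card_mono) auto
    also have "\<dots> < card S" using \<open>finite S\<close> \<open>a \<in> S\<close> by (rule card_Diff1_less)
    finally show "?rank a < card S" .
  qed
  ultimately show ?thesis
    by (simp add: bij_betw_def card_image card_subset_eq)
qed

lemma card_top_choice:
  assumes "trans P" "antisym P" "total_on S P" "finite S"
  shows "card (top_choice P S q) = min (card S) q"
proof -
  let ?rank = "\<lambda>a. card (strictly_above P S a)"
  have bij: "bij_betw ?rank S {..<card S}"
    using assms by (rule bij_betw_card_strictly_above)
  have top: "top_choice P S q = {a \<in> S. ?rank a < q}"
    by (auto simp: top_choice_iff)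
  have "inj_on ?rank (top_choice P S q)"
    using bij unfolding top bij_betw_def by (auto intro: inj_on_subset)
  then have "card (top_choice P S q) = card (?rank ` top_choice P S q)"
    by (simp add: card_image)
  also have "?rank ` top_choice P S q = {k \<in> ?rank ` S. k < q}"
    unfolding top by auto
  also have "\<dots> = {..<min (card S) q}"
    using bij unfolding bij_betw_def by auto
  finally show ?thesis by simp
qed

lemma priority_orderingD:
  assumes "priority_ordering A P"
  shows "trans P" "antisym P" "total_on A P"
  using assms unfolding priority_ordering_def order_on_defs by auto

lemma dom_pairs_finite:
  assumes "finite A" "(S, q) \<in> dom_pairs A"
  shows "finite S"
  using assms unfolding dom_pairs_def by (auto intro: finite_subset)

lemma capacity_filling_if_responsive_for:
  assumes "finite A" "priority_ordering A P" "responsive_for A P C"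
  shows "capacity_filling A C"
  unfolding capacity_filling_def
proof clarify
  fix S q assume dom: "(S, q) \<in> dom_pairs A"
  then have "total_on S P"
    using priority_orderingD(3)[OF assms(2)] by (auto simp: dom_pairs_def intro: total_on_subset)
  then have "card (top_choice P S q) = min (card S) q"
    using priority_orderingD(1,2)[OF assms(2)] dom_pairs_finite[OF assms(1) dom]
    by (intro card_top_choice)
  then show "card (C S q) = min (card S) q"
    using assms(3) dom unfolding responsive_for_def by auto
qed

lemma CWrARP_if_responsive_for:
  assumes "finite A" "priority_ordering A P" "responsive_for A P C"
  shows "CWrARP A C"
  unfolding CWrARP_def
proof clarify
  fix S q S' q' a b
  assume dom: "(S, q) \<in> dom_pairs A" and dom': "(S', q') \<in> dom_pairs A"
    and "a \<in> S'" "b \<in> S" "a \<in> C S q" "b \<in> C S' q'" "b \<notin> C S q"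
  have C: "C S q = top_choice P S q" "C S' q' = top_choice P S' q'"
    using assms(3) dom dom' unfolding responsive_for_def by auto
  note P = priority_orderingD[OF assms(2)]
  have "(b, a) \<notin> P"
    using top_choice_upward_closed[OF P(1,2) dom_pairs_finite[OF assms(1) dom]]
      \<open>a \<in> C S q\<close> \<open>b \<in> S\<close> \<open>b \<notin> C S q\<close> C(1) by blast
  moreover have "a \<noteq> b" "a \<in> A" "b \<in> A"
    using \<open>a \<in> C S q\<close> \<open>b \<notin> C S q\<close> \<open>a \<in> S'\<close> \<open>b \<in> S\<close> dom dom'
    unfolding dom_pairs_def by auto
  ultimately have "(a, b) \<in> P"
    using P(3) unfolding total_on_def by blast
  then show "a \<in> C S' q'"
    using top_choice_upward_closed[OF P(1,2) dom_pairs_finite[OF assms(1) dom']]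
      \<open>b \<in> C S' q'\<close> \<open>a \<in> S'\<close> C(2) by blast
qed

lemma choice_ruleD:
  assumes "choice_rule A C" "(S, q) \<in> dom_pairs A"
  shows "C S q \<noteq> {}" "C S q \<subseteq> S" "card (C S q) \<le> q"
  using assms unfolding choice_rule_def by auto

lemma CWrARPD:
  assumes "CWrARP A C" "(S, q) \<in> dom_pairs A" "(S', q') \<in> dom_pairs A"
    and "a \<in> S \<inter> S'" "b \<in> S \<inter> S'" "a \<in> C S q" "b \<in> C S' q'" "b \<notin> C S q"
  shows "a \<in> C S' q'"
  using assms unfolding CWrARP_def by blast

lemma dom_pairs_capacity_one:
  assumes "finite A" "S \<subseteq> A" "S \<noteq> {}"
  shows "(S, 1) \<in> dom_pairs A"
proof -
  have "A \<noteq> {}" using assms(2,3) by blast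
  then show ?thesis
    using assms unfolding dom_pairs_def by (simp add: Suc_leI card_gt_0_iff)
qed

lemma choice_rule_capacity_one:
  assumes "finite A" "choice_rule A C" "S \<subseteq> A" "S \<noteq> {}"
  obtains x where "x \<in> S" "C S 1 = {x}"
proof -
  have dom: "(S, 1) \<in> dom_pairs A"
    using assms(1,3,4) by (rule dom_pairs_capacity_one)
  note C = choice_ruleD[OF assms(2) dom]
  have "finite (C S 1)"
    using C(2) dom_pairs_finite[OF assms(1) dom] by (rule finite_subset)
  with C(1,3) have "card (C S 1) = 1"
    by (simp add: le_antisym Suc_leI card_gt_0_iff)
  then show ?thesis
    using that C(2) by (auto simp: card_1_singleton_iff)
qed

definition revealed_priority :: "'a set \<Rightarrow> ('a set \<Rightarrow> nat \<Rightarrow> 'a set) \<Rightarrow> ('a \<times> 'a) set" where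
  "revealed_priority A C = {(b, a) \<in> A \<times> A. C {a, b} 1 = {b}}"

context
  fixes A :: "'a set" and C :: "'a set \<Rightarrow> nat \<Rightarrow> 'a set"
  assumes finite: "finite A" and rule: "choice_rule A C"
begin

lemma choice_from_pair:
  assumes "a \<in> A" "b \<in> A"
  shows "C {a, b} 1 = {a} \<or> C {a, b} 1 = {b}"
  using choice_rule_capacity_one[OF finite rule, of "{a, b}"] assms by blast

lemma refl_on_revealed_priority: "refl_on A (revealed_priority A C)"
  unfolding refl_on_def revealed_priority_def using choice_from_pair[of x x for x] by simp

lemma antisym_revealed_priority: "antisym (revealed_priority A C)"
  by (rule antisymI) (auto simp: revealed_priority_def insert_commute)

lemma total_on_revealed_priority: "total_on A (revealed_priority A C)"
  unfolding total_on_def revealed_priority_def using choice_from_pair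
  by (auto simp: insert_commute)

context
  assumes cwrarp: "CWrARP A C"
begin

lemma chosen_beats_rejected:
  assumes "(S, q) \<in> dom_pairs A" "a \<in> C S q" "b \<in> S" "b \<notin> C S q"
  shows "C {a, b} 1 = {a}"
proof -
  have "a \<in> S" "S \<subseteq> A"
    using assms(1,2) choice_ruleD(2)[OF rule assms(1)] unfolding dom_pairs_def by auto
  then have "{a, b} \<subseteq> A" using assms(3) by blast
  then have pair: "({a, b}, 1) \<in> dom_pairs A"
    by (intro dom_pairs_capacity_one[OF finite]) auto
  have "C {a, b} 1 \<noteq> {b}"
  proof
    assume "C {a, b} 1 = {b}"
    then have "a \<in> C {a, b} 1"
      using CWrARPD[OF cwrarp assms(1) pair _ _ assms(2) _ assms(4)] \<open>a \<in> S\<close> assms(3) by simp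
    then show False
      using \<open>C {a, b} 1 = {b}\<close> assms(2,4) by simp
  qed
  then show ?thesis
    using choice_from_pair \<open>{a, b} \<subseteq> A\<close> by blast
qed

lemma revealed_priority_upward_closed:
  assumes "(S, q) \<in> dom_pairs A" "a \<in> C S q" "b \<in> S" "(b, a) \<in> revealed_priority A C"
  shows "b \<in> C S q"
proof (rule ccontr)
  assume "b \<notin> C S q"
  with assms(1-3) have "C {a, b} 1 = {a}"
    by (rule chosen_beats_rejected)
  moreover have "C {a, b} 1 = {b}"
    using assms(4) unfolding revealed_priority_def by simp
  ultimately show False
    using \<open>b \<notin> C S q\<close> assms(2) by auto
qed

lemma trans_revealed_priority: "trans (revealed_priority A C)"
proof (rule transI)
  let ?P = "revealed_priority A C"
  fix x y z assume xy: "(x, y) \<in> ?P" and yz: "(y, z) \<in> ?P"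
  then have xyz: "{x, y, z} \<subseteq> A" unfolding revealed_priority_def by auto
  then obtain w where w: "w \<in> {x, y, z}" "C {x, y, z} 1 = {w}"
    by (rule choice_rule_capacity_one[OF finite rule]) simp
  have dom: "({x, y, z}, 1) \<in> dom_pairs A"
    using xyz by (intro dom_pairs_capacity_one[OF finite]) auto
  have above_w: "v = w" if "v \<in> {x, y, z}" "(v, w) \<in> ?P" for v
  proof -
    have "w \<in> C {x, y, z} 1" using w(2) by simp
    from revealed_priority_upward_closed[OF dom this that] show "v = w"
      using w(2) by simp
  qed
  from w(1) show "(x, z) \<in> ?P"
  proof (elim insertE emptyE)
    assume "w = x"
    show ?thesis
    proof (cases "x = z")
      case True
      then show ?thesis
        using refl_on_revealed_priority xyz unfolding refl_on_def by auto
    next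
      case False
      then have "(x, z) \<in> ?P \<or> (z, x) \<in> ?P"
        using total_on_revealed_priority xyz unfolding total_on_def by auto
      then show ?thesis
        using above_w[of z] \<open>w = x\<close> False by auto
    qed
  next
    assume "w = y"
    then show ?thesis using above_w[of x] xy yz by auto
  next
    assume "w = z"
    then show ?thesis using above_w[of y] xy yz by auto
  qed
qed

lemma priority_ordering_revealed_priority: "priority_ordering A (revealed_priority A C)"
  unfolding priority_ordering_def order_on_defs
  using refl_on_revealed_priority antisym_revealed_priority total_on_revealed_priority
    trans_revealed_priority
  by (auto simp: revealed_priority_def)

lemma responsive_for_revealed_priority:
  assumes "capacity_filling A C"
  shows "responsive_for A (revealed_priority A C) C"
  unfolding responsive_for_def
proof clarify
  let ?P = "revealed_priority A C"
  fix S q assume dom: "(S, q) \<in> dom_pairs A"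
  have "finite S" "S \<subseteq> A"
    using dom_pairs_finite[OF finite dom] dom unfolding dom_pairs_def by auto
  note C = choice_ruleD(2,3)[OF rule dom]
  have "finite (top_choice ?P S q)"
    using \<open>finite S\<close> unfolding top_choice_def by simp
  moreover have "C S q \<subseteq> top_choice ?P S q"
  proof
    fix a assume "a \<in> C S q"
    then have "strictly_above ?P S a \<subseteq> C S q - {a}"
      using revealed_priority_upward_closed[OF dom] unfolding strictly_above_def by auto
    moreover have "finite (C S q)"
      using C(1) \<open>finite S\<close> by (rule finite_subset)
    ultimately have "card (strictly_above ?P S a) \<le> card (C S q - {a})"
      by (intro card_mono) auto
    also have "\<dots> < card (C S q)"
      using \<open>finite (C S q)\<close> \<open>a \<in> C S q\<close> by (rule card_Diff1_less)
    finally have "card (strictly_above ?P S a) < card (C S q)" .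
    then show "a \<in> top_choice ?P S q"
      using \<open>a \<in> C S q\<close> C(1) C(2) unfolding top_choice_iff by auto
  qed
  moreover have "card (C S q) = card (top_choice ?P S q)"
    using assms dom card_top_choice[OF trans_revealed_priority antisym_revealed_priority
        total_on_subset[OF total_on_revealed_priority \<open>S \<subseteq> A\<close>] \<open>finite S\<close>]
    unfolding capacity_filling_def by auto
  ultimately show "C S q = top_choice ?P S q"
    by (rule card_subset_eq)
qed

end

end

theorem theorem2:
  fixes A :: "'a set" and C :: "'a set \<Rightarrow> nat \<Rightarrow> 'a set"
  assumes "finite A" and "A \<noteq> {}" and "choice_rule A C"
  shows "responsive A C \<longleftrightarrow> capacity_filling A C \<and> CWrARP A C"
proof
  assume "responsive A C"
  then obtain P where "priority_ordering A P" "responsive_for A P C"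
    unfolding responsive_def by blast
  then show "capacity_filling A C \<and> CWrARP A C"
    using capacity_filling_if_responsive_for CWrARP_if_responsive_for \<open>finite A\<close> by blast
next
  assume "capacity_filling A C \<and> CWrARP A C"
  then show "responsive A C"
    unfolding responsive_def
    using priority_ordering_revealed_priority responsive_for_revealed_priority assms(1,3) by blast
qed

end
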